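(* Let $n>1$. The set $\{N\in\mathcal{G}_n:\mathbb{F}_n/N\text{ is torsion-free}\}$ is $\mathbf{\Pi}^0_1$-complete.
   Context: $\mathbb{F}_n$ is the free group on $\gamma_1,\dots,\gamma_n$. $\mathcal{G}_n$ is the set of normal subgroups $N\trianglelefteq\mathbb{F}_n$, viewed as a subset of $\{0,1\}^{\mathbb{F}_n}$ with the subspace topology of the product of discrete topologies (a compact zero-dimensional Polish space). $\mathbf{\Pi}^0_1$ = closed sets. $A\subseteq X$ is $\mathbf{\Pi}^0_1$-complete if it is closed and for every zero-dimensional Polish space $Y$ and every closed $B\subseteq Y$ there is a continuous $f:Y\to X$ with $f^{-1}[A]=B$. *)

theory Defs
  imports "HOL-Analysis.Analysis" "HOL-Algebra.Coset"
begin

text \<open>Elements are freely reduced words; a letter (i, True) stands for the generator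
  gamma_i and (i, False) for its inverse.\<close>

type_synonym fg_word = "(nat \<times> bool) list"

fun fg_reduced :: "fg_word \<Rightarrow> bool" where
  "fg_reduced [] = True"
| "fg_reduced [x] = True"
| "fg_reduced (x # y # ys) = (\<not> (fst x = fst y \<and> snd x \<noteq> snd y) \<and> fg_reduced (y # ys))"

fun fg_cons :: "nat \<times> bool \<Rightarrow> fg_word \<Rightarrow> fg_word" where
  "fg_cons x [] = [x]"
| "fg_cons x (y # ys) = (if fst x = fst y \<and> snd x \<noteq> snd y then ys else x # y # ys)"

definition fg_mult :: "fg_word \<Rightarrow> fg_word \<Rightarrow> fg_word" where
  "fg_mult xs ys = foldr fg_cons xs ys"

definition free_group :: "nat \<Rightarrow> fg_word monoid" where
  "free_group n = \<lparr> carrier = {w. fg_reduced w \<and> (\<forall>x\<in>set w. fst x < n)},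
                    mult = fg_mult, one = [] \<rparr>"

definition fg_gen :: "nat \<Rightarrow> fg_word" where
  "fg_gen i = [(i, True)]"

definition torsion_free :: "('a, 'b) monoid_scheme \<Rightarrow> bool" where
  "torsion_free G \<longleftrightarrow>
     (\<forall>x\<in>carrier G. x \<noteq> \<one>\<^bsub>G\<^esub> \<longrightarrow> (\<forall>k::nat. k > 0 \<longrightarrow> x [^]\<^bsub>G\<^esub> k \<noteq> \<one>\<^bsub>G\<^esub>))"

text \<open>A point of the product space {0,1}^(F_n) is a function chi from F_n to bool
  (extensional, i.e. undefined off the carrier); it encodes the subset of F_n where it is True.\<close>

definition cube_space :: "nat \<Rightarrow> (fg_word \<Rightarrow> bool) topology" where
  "cube_space n = product_topology (\<lambda>_. discrete_topology (UNIV :: bool set)) (carrier (free_group n))"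

definition set_of_point :: "nat \<Rightarrow> (fg_word \<Rightarrow> bool) \<Rightarrow> fg_word set" where
  "set_of_point n c = {g \<in> carrier (free_group n). c g}"

definition normal_subgroup_space :: "nat \<Rightarrow> (fg_word \<Rightarrow> bool) topology" where
  "normal_subgroup_space n =
     subtopology (cube_space n) {c. set_of_point n c \<lhd> free_group n}"

definition torsion_free_quotients :: "nat \<Rightarrow> (fg_word \<Rightarrow> bool) set" where
  "torsion_free_quotients n =
     {c \<in> topspace (normal_subgroup_space n).
        torsion_free (free_group n Mod set_of_point n c)}"

definition Polish_space :: "'a topology \<Rightarrow> bool" where
  "Polish_space X \<longleftrightarrow> completely_metrizable_space X \<and> separable_space X"

end

theory Submission
  imports Defs "HOL-Algebra.Elementary_Groups"
begin

text \<open>Let \<open>N\<^sub>m\<close> be the normal subgroup of words whose exponent sum is divisible by \<open>m\<close>, the kernel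
  of \<open>F\<^sub>n \<rightarrow> \<int>/m\<close>. The quotient by \<open>N\<^sub>0\<close> embeds in \<open>\<int>\<close> and is torsion-free, while for \<open>m \<ge> 2\<close> a generator
  has order \<open>m\<close> modulo \<open>N\<^sub>m\<close>; one generator suffices, so only \<open>n \<ge> 1\<close> is used.

  Hardness: in a zero-dimensional Polish space the open set \<open>Y - B\<close> is a countable union of
  clopen sets \<open>V\<^sub>0, V\<^sub>1, \<dots>\<close>. Send \<open>y\<close> to \<open>N\<^bsub>k+2\<^esub>\<close> for the least \<open>k\<close> with \<open>y \<in> V\<^sub>k\<close>, and to \<open>N\<^sub>0\<close> if \<open>y \<in> B\<close>.
  The map is continuous because a modulus dividing a nonzero exponent sum \<open>s\<close> is at most \<open>|s|\<close>,
  so whether a given word lies in the image of \<open>y\<close> only depends on which of finitely many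
  \<open>V\<^sub>j\<close> contain \<open>y\<close>.

  Closedness: \<open>F\<^sub>n/N\<close> is torsion-free iff \<open>g\<^sup>k \<in> N\<close> implies \<open>g \<in> N\<close> for all \<open>g\<close> and \<open>k > 0\<close>, and each
  such condition involves only two coordinates of \<open>N\<close>.\<close>

definition letter_inv :: "nat \<times> bool \<Rightarrow> nat \<times> bool" where
  "letter_inv x = (fst x, \<not> snd x)"

lemma fg_reduced_ConsD: "fg_reduced (x # w) \<Longrightarrow> fg_reduced w"
  by (cases w) auto

lemma fg_cons_letter_inv: "fg_reduced w \<Longrightarrow> fg_cons (letter_inv x) (fg_cons x w) = w"
  by (cases w rule: fg_reduced.cases) (auto simp: letter_inv_def prod_eq_iff)

lemma fg_mult_Nil [simp]: "fg_mult [] w = w"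
  by (simp add: fg_mult_def)

lemma fg_mult_Cons [simp]: "fg_mult (x # v) w = fg_cons x (fg_mult v w)"
  by (simp add: fg_mult_def)

lemma fg_reduced_fg_cons: "fg_reduced w \<Longrightarrow> fg_reduced (fg_cons x w)"
  by (cases w) (auto dest: fg_reduced_ConsD)

lemma fg_reduced_fg_mult: "fg_reduced w \<Longrightarrow> fg_reduced (fg_mult v w)"
  by (induction v) (auto intro: fg_reduced_fg_cons)

lemma fg_mult_fg_cons:
  assumes "fg_reduced u"
  shows "fg_mult (fg_cons x w) u = fg_cons x (fg_mult w u)"
proof (cases w)
  case (Cons y v)
  show ?thesis
  proof (cases "fst x = fst y \<and> snd x \<noteq> snd y")
    case True
    then have "x = letter_inv y"
      by (auto simp: letter_inv_def prod_eq_iff)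
    then show ?thesis
      using Cons True fg_cons_letter_inv[OF fg_reduced_fg_mult[OF assms]] by simp
  qed (use Cons in auto)
qed simp

lemma fg_mult_assoc: "fg_reduced u \<Longrightarrow> fg_mult (fg_mult v w) u = fg_mult v (fg_mult w u)"
  by (induction v) (simp_all add: fg_mult_fg_cons)

lemma set_fg_mult: "set (fg_mult v w) \<subseteq> set v \<union> set w"
proof (induction v)
  case (Cons x v)
  have "set (fg_cons x u) \<subseteq> insert x (set u)" for u
    by (cases u) auto
  with Cons show ?case by fastforce
qed simp

lemma fg_mult_rev_letter_inv:
  "fg_reduced (v @ w) \<Longrightarrow> fg_mult (rev (map letter_inv v)) (v @ w) = w"
proof (induction v arbitrary: w)
  case (Cons x v)
  have "fg_cons (letter_inv x) (x # v @ w) = v @ w"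
    by (cases "v @ w") (auto simp: letter_inv_def)
  with Cons show ?case
    by (simp add: fg_mult_def fg_reduced_ConsD)
qed simp

lemma group_free_group: "group (free_group n)"
proof (rule groupI)
  fix x assume x: "x \<in> carrier (free_group n)"
  define y where "y = fg_mult (rev (map letter_inv x)) []"
  have "y \<in> carrier (free_group n)"
    using x set_fg_mult[of "rev (map letter_inv x)" "[]"]
    by (fastforce simp: free_group_def y_def letter_inv_def fg_reduced_fg_mult)
  moreover have "fg_mult y x = []"
    using x fg_mult_assoc[of x "rev (map letter_inv x)" "[]"] fg_mult_rev_letter_inv[of x "[]"]
    by (simp add: y_def free_group_def)
  ultimately show "\<exists>y\<in>carrier (free_group n). y \<otimes>\<^bsub>free_group n\<^esub> x = \<one>\<^bsub>free_group n\<^esub>"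
    by (auto simp: free_group_def)
qed (use set_fg_mult in \<open>fastforce simp: free_group_def fg_reduced_fg_mult fg_mult_assoc\<close>)+

fun exponent_sum :: "fg_word \<Rightarrow> int" where
  "exponent_sum [] = 0"
| "exponent_sum (x # w) = (if snd x then 1 else -1) + exponent_sum w"

lemma exponent_sum_fg_cons: "exponent_sum (fg_cons x w) = exponent_sum (x # w)"
  by (cases w) auto

lemma exponent_sum_fg_mult: "exponent_sum (fg_mult v w) = exponent_sum v + exponent_sum w"
  by (induction v) (simp_all add: exponent_sum_fg_cons)

lemma exponent_sum_hom: "exponent_sum \<in> hom (free_group n) integer_group"
  by (rule homI) (simp_all add: free_group_def exponent_sum_fg_mult)

lemma fg_gen_in_carrier: "i < n \<Longrightarrow> fg_gen i \<in> carrier (free_group n)"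
  by (simp add: fg_gen_def free_group_def)

lemma exponent_sum_fg_gen [simp]: "exponent_sum (fg_gen i) = 1"
  by (simp add: fg_gen_def)

lemma torsion_free_FactGroup_iff:
  assumes "N \<lhd> G"
  shows "torsion_free (G Mod N) \<longleftrightarrow>
           (\<forall>g\<in>carrier G. \<forall>k::nat. k > 0 \<longrightarrow> g [^]\<^bsub>G\<^esub> k \<in> N \<longrightarrow> g \<in> N)"
proof -
  interpret normal N G by (rule assms)
  have "r_coset G N g = N \<longleftrightarrow> g \<in> N" if "g \<in> carrier G" for g
    using that rcos_self[OF that subgroup_axioms] rcos_const[OF is_group] by auto
  then show ?thesis
    unfolding torsion_free_def carrier_FactGroup one_FactGroup
    by (auto simp: FactGroup_pow)
qed

lemma normal_hom_integer_group_dvd: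
  assumes "group G" and h: "h \<in> hom G integer_group"
  shows "{g \<in> carrier G. int m dvd h g} \<lhd> G"
proof -
  have "(\<lambda>g. h g mod int m) \<in> hom G (integer_mod_group m)"
    using h by (intro homI) (auto simp: hom_mult carrier_integer_mod_group mod_add_eq)
  then interpret group_hom G "integer_mod_group m" "\<lambda>g. h g mod int m"
    using assms by (simp add: group_hom_def group_hom_axioms_def)
  have "kernel G (integer_mod_group m) (\<lambda>g. h g mod int m) = {g \<in> carrier G. int m dvd h g}"
    by (auto simp: kernel_def)
  with normal_kernel show ?thesis by simp
qed

lemma torsion_free_FactGroup_hom_integer_group:
  assumes "group G" and h: "h \<in> hom G integer_group"
  shows "torsion_free (G Mod {g \<in> carrier G. h g = 0})"
proof -
  have "h (g [^]\<^bsub>G\<^esub> k) = int k * h g" if "g \<in> carrier G" for g k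
    using hom_nat_pow[OF h] assms that by simp
  with normal_hom_integer_group_dvd[OF assms, of 0] show ?thesis
    by (simp add: torsion_free_FactGroup_iff)
qed

lemma not_torsion_free_FactGroup_hom_integer_group_dvd:
  assumes "group G" and h: "h \<in> hom G integer_group"
    and g: "g \<in> carrier G" "h g = 1" and "m \<ge> 2"
  shows "\<not> torsion_free (G Mod {x \<in> carrier G. int m dvd h x})"
proof -
  have "h (g [^]\<^bsub>G\<^esub> m) = int m"
    using hom_nat_pow[OF h] assms by simp
  moreover have "\<not> int m dvd 1"
    using \<open>m \<ge> 2\<close> by simp
  ultimately show ?thesis
    using g \<open>m \<ge> 2\<close> monoid.nat_pow_closed[OF group.is_monoid[OF \<open>group G\<close>]]
    by (auto simp: torsion_free_FactGroup_iff[OF normal_hom_integer_group_dvd[OF assms(1,2)]]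
             intro!: bexI[of _ g] exI[of _ m])
qed

definition exponent_sum_dvd_point :: "nat \<Rightarrow> nat \<Rightarrow> fg_word \<Rightarrow> bool" where
  "exponent_sum_dvd_point n m = (\<lambda>g\<in>carrier (free_group n). int m dvd exponent_sum g)"

lemma exponent_sum_dvd_point_extensional:
  "exponent_sum_dvd_point n m \<in> extensional (carrier (free_group n))"
  by (simp add: exponent_sum_dvd_point_def)

lemma set_of_point_exponent_sum_dvd_point:
  "set_of_point n (exponent_sum_dvd_point n m) =
     {g \<in> carrier (free_group n). int m dvd exponent_sum g}"
  by (auto simp: set_of_point_def exponent_sum_dvd_point_def)

lemma exponent_sum_dvd_point_in_topspace:
  "exponent_sum_dvd_point n m \<in> topspace (normal_subgroup_space n)"
  using exponent_sum_dvd_point_extensional normal_hom_integer_group_dvd[OF group_free_group exponent_sum_hom]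
  by (simp add: normal_subgroup_space_def cube_space_def PiE_def set_of_point_exponent_sum_dvd_point)

lemma exponent_sum_dvd_point_torsion_free_iff:
  assumes "n > 0" "m \<noteq> 1"
  shows "exponent_sum_dvd_point n m \<in> torsion_free_quotients n \<longleftrightarrow> m = 0"
proof (cases "m = 0")
  case True
  then show ?thesis
    using torsion_free_FactGroup_hom_integer_group[OF group_free_group exponent_sum_hom]
    by (simp add: torsion_free_quotients_def exponent_sum_dvd_point_in_topspace
                  set_of_point_exponent_sum_dvd_point)
next
  case False
  with assms have "m \<ge> 2" by simp
  with False show ?thesis
    using not_torsion_free_FactGroup_hom_integer_group_dvd
            [OF group_free_group exponent_sum_hom fg_gen_in_carrier[OF assms(1)]]
    by (simp add: torsion_free_quotients_def set_of_point_exponent_sum_dvd_point)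
qed

lemma closedin_torsion_free_quotients:
  "closedin (normal_subgroup_space n) (torsion_free_quotients n)"
proof -
  let ?X = "normal_subgroup_space n" and ?F = "free_group n"
  have coordinate: "closedin ?X {c \<in> topspace ?X. c g \<in> A}" if "g \<in> carrier ?F" for g A
    using that unfolding normal_subgroup_space_def cube_space_def
    by (intro closedin_continuous_map_preimage[where Y = "discrete_topology UNIV"]
              continuous_map_from_subtopology continuous_map_product_projection) auto
  have pow_closed: "g [^]\<^bsub>?F\<^esub> k \<in> carrier ?F" if "g \<in> carrier ?F" for g and k :: nat
    using that by (simp add: group.is_monoid[OF group_free_group] monoid.nat_pow_closed)
  have "c \<in> torsion_free_quotients n \<longleftrightarrow> c \<in> topspace ?X \<and>
          (\<forall>g\<in>carrier ?F. \<forall>k::nat. k > 0 \<longrightarrow> c (g [^]\<^bsub>?F\<^esub> k) \<longrightarrow> c g)" for c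
  proof -
    have "set_of_point n c \<lhd> ?F" if "c \<in> topspace ?X"
      using that by (simp add: normal_subgroup_space_def)
    then show ?thesis
      unfolding torsion_free_quotients_def
      by (auto simp: torsion_free_FactGroup_iff set_of_point_def pow_closed)
  qed
  moreover have "[] \<in> carrier ?F"
    by (simp add: free_group_def)
  ultimately have "torsion_free_quotients n = (\<Inter>g\<in>carrier ?F. \<Inter>k\<in>{0::nat<..}.
          ({c \<in> topspace ?X. c (g [^]\<^bsub>?F\<^esub> k) \<in> {False}} \<union> {c \<in> topspace ?X. c g \<in> {True}}))"
    by auto
  also have "closedin ?X \<dots>"
    using \<open>[] \<in> carrier ?F\<close>
    by (intro closedin_INT closedin_Un coordinate pow_closed) auto
  finally show ?thesis .
qed

lemma (in Metric_space) second_countable_mtopology: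
  assumes "separable_space mtopology"
  shows "second_countable mtopology"
proof -
  obtain C where C: "countable C" "C \<subseteq> M" "mtopology closure_of C = M"
    using assms by (auto simp: separable_space_def)
  define \<B> where "\<B> = (\<lambda>(c, k). mball c (inverse (real (Suc k)))) ` (C \<times> UNIV)"
  have "\<exists>V\<in>\<B>. x \<in> V \<and> V \<subseteq> U" if U: "openin mtopology U" and "x \<in> U" for U x
  proof -
    obtain r where r: "r > 0" "mball x r \<subseteq> U" and "x \<in> M"
      using U \<open>x \<in> U\<close> unfolding openin_mtopology by blast
    obtain k where k: "inverse (real (Suc k)) < r / 2"
      using reals_Archimedean[of "r / 2"] r by auto
    let ?a = "inverse (real (Suc k))"
    have "x \<in> mball x ?a"
      using \<open>x \<in> M\<close> by simp
    moreover have "x \<in> mtopology closure_of C"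
      using C \<open>x \<in> M\<close> by simp
    ultimately obtain c where c: "c \<in> C" "c \<in> mball x ?a"
      unfolding in_closure_of using openin_mball by blast
    have "mball c ?a \<subseteq> mball x r"
      using c k \<open>x \<in> M\<close> by (intro mball_subset) (auto simp: commute)
    with c r \<open>x \<in> M\<close> show ?thesis
      by (auto simp: \<B>_def commute intro!: bexI[of _ "(c, k)"])
  qed
  then show ?thesis
    unfolding second_countable_def using C(1) by (intro exI[of _ \<B>]) (auto simp: \<B>_def)
qed

lemma Polish_space_imp_second_countable: "Polish_space Y \<Longrightarrow> second_countable Y"
  unfolding Polish_space_def completely_metrizable_space_def
  using Metric_space.second_countable_mtopology by blast


lemma openin_eq_Union_clopen_seq:
  assumes "second_countable Y" and "Y dim_le 0" and "openin Y U"
  obtains V :: "nat \<Rightarrow> 'a set"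
  where "\<And>k. closedin Y (V k)" "\<And>k. openin Y (V k)" "(\<Union>k. V k) = U"
proof -
  define \<U> where "\<U> = {V. closedin Y V \<and> openin Y V \<and> V \<subseteq> U}"
  have "neighbourhood_base_of (\<lambda>V. closedin Y V \<and> openin Y V) Y"
    using assms(2) by (simp add: dimension_le_0_neighbourhood_base_of_clopen)
  then have "U \<subseteq> \<Union>\<U>"
    using assms(3) unfolding neighbourhood_base_of \<U>_def by fast
  moreover have "Lindelof_space (subtopology Y U)"
    using assms(1) by (simp add: second_countable_imp_Lindelof_space second_countable_subtopology)
  moreover have "\<forall>V\<in>\<U>. openin Y V"
    by (simp add: \<U>_def)
  ultimately obtain \<V> where \<V>: "countable \<V>" "\<V> \<subseteq> \<U>" "topspace Y \<inter> U \<subseteq> \<Union>\<V>"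
    unfolding Lindelof_space_subtopology by (metis le_infI2)
  define V where "V = from_nat_into (insert {} \<V>)"
  have range_V: "range V = insert {} \<V>"
    using \<V>(1) by (simp add: V_def)
  have "closedin Y (V k) \<and> openin Y (V k)" for k
  proof -
    have "V k \<in> insert {} \<V>"
      using range_V by blast
    with \<V>(2) show ?thesis
      by (auto simp: \<U>_def)
  qed
  moreover have "(\<Union>k. V k) = U"
    using range_V \<V> openin_subset[OF assms(3)] by (auto simp: \<U>_def)
  ultimately show thesis
    by (intro that) auto
qed

definition first_hit_modulus :: "(nat \<Rightarrow> bool) \<Rightarrow> nat" where
  "first_hit_modulus P = (if \<exists>k. P k then (LEAST k. P k) + 2 else 0)"

lemma first_hit_modulus_eq_0_iff: "first_hit_modulus P = 0 \<longleftrightarrow> (\<forall>k. \<not> P k)"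
  by (simp add: first_hit_modulus_def)

lemma first_hit_modulus_neq_1: "first_hit_modulus P \<noteq> 1"
  by (simp add: first_hit_modulus_def)

lemma Least_cong_bounded:
  fixes P Q :: "nat \<Rightarrow> bool"
  assumes agree: "\<forall>j\<le>N. P j = Q j" and "P k" "k \<le> N"
  shows "(LEAST k. P k) = (LEAST k. Q k)"
proof -
  have "Least P \<le> N" "P (Least P)"
    using Least_le[of P k] LeastI[of P k] assms(2,3) by auto
  show ?thesis
  proof (rule sym, rule Least_equality)
    show "Q (Least P)"
      using \<open>P (Least P)\<close> \<open>Least P \<le> N\<close> agree by blast
    show "Least P \<le> m" if "Q m" for m
    proof (rule ccontr)
      assume "\<not> Least P \<le> m"
      with \<open>Least P \<le> N\<close> agree that have "P m"
        by auto
      with \<open>\<not> Least P \<le> m\<close> show False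
        using Least_le by blast
    qed
  qed
qed

lemma first_hit_modulus_dvd_if_agree:
  assumes agree: "\<forall>j\<le>N. P j = Q j" and "nat \<bar>s\<bar> \<le> N"
    and dvd: "int (first_hit_modulus P) dvd s"
  shows "int (first_hit_modulus Q) dvd s"
proof (cases "s = 0")
  case False
  with dvd have hit: "\<exists>k. P k"
    by (auto simp: first_hit_modulus_def split: if_splits)
  then have "int (Least P + 2) dvd s"
    using dvd by (simp add: first_hit_modulus_def)
  then have "int (Least P + 2) \<le> \<bar>s\<bar>"
    using dvd_imp_le_int[OF False] by (metis abs_of_nat)
  with assms(2) have "Least P \<le> N"
    by linarith
  then have "Least P = Least Q" "\<exists>k. Q k"
    using Least_cong_bounded[OF agree LeastI_ex[OF hit]] agree LeastI_ex[OF hit] by auto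
  with dvd hit show ?thesis
    by (simp add: first_hit_modulus_def)
qed simp

lemma first_hit_modulus_dvd_cong:
  assumes "\<forall>j\<le>N. P j = Q j" and "nat \<bar>s\<bar> \<le> N"
  shows "int (first_hit_modulus P) dvd s \<longleftrightarrow> int (first_hit_modulus Q) dvd s"
proof -
  have "\<forall>j\<le>N. Q j = P j"
    using assms(1) by simp
  then show ?thesis
    using first_hit_modulus_dvd_if_agree assms by blast
qed

lemma continuous_map_discrete_topology_locally_constant:
  assumes "\<And>y. y \<in> topspace Y \<Longrightarrow> \<exists>W. openin Y W \<and> y \<in> W \<and> (\<forall>z\<in>W. h z = h y)"
  shows "continuous_map Y (discrete_topology UNIV) h"
  unfolding continuous_map_def
proof (intro conjI allI impI)
  fix U
  have "\<exists>W. openin Y W \<and> y \<in> W \<and> W \<subseteq> {y \<in> topspace Y. h y \<in> U}"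
    if y: "y \<in> {y \<in> topspace Y. h y \<in> U}" for y
  proof -
    obtain W where W: "openin Y W" "y \<in> W" "\<forall>z\<in>W. h z = h y"
      using assms y by blast
    moreover have "W \<subseteq> {y \<in> topspace Y. h y \<in> U}"
    proof
      fix z assume "z \<in> W"
      then have "z \<in> topspace Y" and "h z = h y"
        using openin_subset[OF W(1)] W(3) by auto
      with y show "z \<in> {y \<in> topspace Y. h y \<in> U}"
        by simp
    qed
    ultimately show ?thesis
      by blast
  qed
  then show "openin Y {y \<in> topspace Y. h y \<in> U}"
    by (subst openin_subopen) blast
qed simp

lemma continuous_map_exponent_sum_dvd_point_first_hit:
  assumes clopen: "\<And>k. closedin Y (V k)" "\<And>k. openin Y (V k)"
  shows "continuous_map Y (normal_subgroup_space n)
           (\<lambda>y. exponent_sum_dvd_point n (first_hit_modulus (\<lambda>k. y \<in> V k)))"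
    (is "continuous_map _ _ ?f")
proof -
  have "continuous_map Y (discrete_topology UNIV) (\<lambda>y. ?f y g)"
    if g: "g \<in> carrier (free_group n)" for g
  proof (rule continuous_map_discrete_topology_locally_constant)
    fix y assume "y \<in> topspace Y"
    define N where "N = nat \<bar>exponent_sum g\<bar>"
    define W where "W = (\<Inter>j\<in>{..N}. if y \<in> V j then V j else topspace Y - V j) \<inter> topspace Y"
    have "openin Y W"
      unfolding W_def by (rule openin_INT) (simp_all add: clopen openin_diff)
    moreover have "y \<in> W"
      using \<open>y \<in> topspace Y\<close> by (auto simp: W_def)
    moreover have "?f z g = ?f y g" if "z \<in> W" for z
    proof -
      have "\<forall>j\<le>N. (z \<in> V j) = (y \<in> V j)"
        using that by (auto simp: W_def split: if_splits)
      then show ?thesis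
        using first_hit_modulus_dvd_cong[of N _ _ "exponent_sum g"] g
        by (simp add: exponent_sum_dvd_point_def N_def)
    qed
    ultimately show "\<exists>W. openin Y W \<and> y \<in> W \<and> (\<forall>z\<in>W. ?f z g = ?f y g)"
      by blast
  qed
  then have "continuous_map Y (cube_space n) ?f"
    unfolding cube_space_def continuous_map_componentwise
    using exponent_sum_dvd_point_extensional by blast
  then show ?thesis
    using exponent_sum_dvd_point_in_topspace
    unfolding normal_subgroup_space_def
    by (intro continuous_map_into_subtopology) auto
qed

theorem mainTheorem10:
  fixes n :: nat
  assumes "n > 1"
  shows "closedin (normal_subgroup_space n) (torsion_free_quotients n) \<and>
         (\<forall>(Y :: 'b topology) (B :: 'b set).
            Polish_space Y \<and> Y dim_le 0 \<and> closedin Y B \<longrightarrow>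
            (\<exists>f. continuous_map Y (normal_subgroup_space n) f \<and>
                 {y \<in> topspace Y. f y \<in> torsion_free_quotients n} = B))"
proof (intro conjI allI impI)
  show "closedin (normal_subgroup_space n) (torsion_free_quotients n)"
    by (rule closedin_torsion_free_quotients)
  fix Y :: "'b topology" and B :: "'b set"
  assume Y: "Polish_space Y \<and> Y dim_le 0 \<and> closedin Y B"
  then obtain V :: "nat \<Rightarrow> 'b set"
    where clopen: "\<And>k. closedin Y (V k)" "\<And>k. openin Y (V k)"
      and V: "(\<Union>k. V k) = topspace Y - B"
    by (meson openin_eq_Union_clopen_seq Polish_space_imp_second_countable openin_diff openin_topspace)
  define f where "f y = exponent_sum_dvd_point n (first_hit_modulus (\<lambda>k. y \<in> V k))" for y
  have "continuous_map Y (normal_subgroup_space n) f"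
    unfolding f_def using clopen by (rule continuous_map_exponent_sum_dvd_point_first_hit)
  moreover have "f y \<in> torsion_free_quotients n \<longleftrightarrow> y \<notin> (\<Union>k. V k)" for y
    using assms exponent_sum_dvd_point_torsion_free_iff[OF _ first_hit_modulus_neq_1]
    by (simp add: f_def first_hit_modulus_eq_0_iff)
  with V have "{y \<in> topspace Y. f y \<in> torsion_free_quotients n} = B"
    using closedin_subset[of Y B] Y by auto
  ultimately show "\<exists>f. continuous_map Y (normal_subgroup_space n) f \<and>
                      {y \<in> topspace Y. f y \<in> torsion_free_quotients n} = B"
    by blast
qed

end
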